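(* Let $\mathcal{A}=(A,B,s,t,\Delta)$ be a left multiplier bialgebroid and $J\colon A\to A^{\mathrm{op}}$ the canonical linear anti-isomorphism. Regard $J\circ s$ as an anti-homomorphism and $J\circ t$ as a homomorphism from $B$ to $M(A^{\mathrm{op}})\subseteq R(A^{\mathrm{op}})$ (written simply $s$, $t$). Then $J\otimes J$ induces a linear isomorphism from ${}_BA\otimes A^B$ onto ${}^B(A^{\mathrm{op}})\otimes(A^{\mathrm{op}})_B$, the quotient of $A^{\mathrm{op}}\otimes A^{\mathrm{op}}$ by the span of $J(s(x)a)\otimes J(b)-J(a)\otimes J(t(x)b)$. Define $\Delta^{\mathrm{op}}$ by $(J(b)\otimes J(c))\Delta^{\mathrm{op}}(J(a))=(J\otimes J)(\Delta(a)(b\otimes c))$. Then $\mathcal{A}^{\mathrm{op}}=(A^{\mathrm{op}},B,t,s,\Delta^{\mathrm{op}})$ is a right multiplier bialgebroid, whose associated maps are $\widetilde{{}_\lambda T}^{\mathrm{op}}=(J\otimes J)\circ\widetilde{T_\lambda}\circ(J\otimes J)^{-1}$ and $\widetilde{{}_\rho T}^{\mathrm{op}}=(J\otimes J)\circ\widetilde{T_\rho}\circ(J\otimes J)^{-1}$. Conversely, for every right multiplier bialgebroid $\mathcal{A}'$ there exists a unique left multiplier bialgebroid $\mathcal{A}$ with $\mathcal{A}'=\mathcal{A}^{\mathrm{op}}$.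
   Context: All algebras are associative complex algebras, not necessarily unital. For $A$ with $A_A$ non-degenerate, $L(A)=\mathrm{End}(A_A)$ and $M(A)=\{T\in L(A):aT\in A\}$. For $A$ with ${}_AA$ non-degenerate, $R(A)$ is the algebra of left $A$-module endomorphisms of $A$ with reversed composition, written on the right ($a\mapsto aT$), containing $A$ via right multiplication, and $M(A)=\{T\in R(A):TA\subseteq A\}$; $J$ identifies $M(A)^{\mathrm{op}}$ with $M(A^{\mathrm{op}})$. Left multiplier bialgebroid $(A,B,s,t,\Delta)$: (i) $A_A$ non-degenerate and idempotent; (ii) $s\colon B\to M(A)$ homomorphism, $t$ anti-homomorphism, commuting images, injective, $s(B)A=A=t(B)A$; ${}_BA\otimes A^B$ (quotient of $A\otimes A$ by the span of $s(x)a\otimes b-a\otimes t(x)b$) non-degenerate as right module over $A\otimes1$ and $1\otimes A$; (iii) $\Delta$ a homomorphism into endomorphisms $T$ of ${}_BA\otimes A^B$ for which $T(a\otimes1),T(1\otimes b)$ exist with $T(a\otimes b)=T(a\otimes1)(1\otimes b)=T(1\otimes b)(a\otimes1)$; (iv) $\Delta(s(x)t(y)as(x')t(y'))=(t(y)\otimes s(x))\Delta(a)(t(y')\otimes s(x'))$; (v) if $\Delta(b)(1\otimes c)=\sum p_i\otimes q_i$, $\Delta(b)(a\otimes1)=\sum u_j\otimes v_j$ then $\sum\Delta(p_i)(a\otimes1)\otimes q_i=\sum u_j\otimes\Delta(v_j)(1\otimes c)$ in $A^{\otimes3}$ modulo the span of $s(x)a\otimes b\otimes c-a\otimes t(x)b\otimes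 c$, $a\otimes s(x)b\otimes c-a\otimes b\otimes t(x)c$. Associated maps $\widetilde{T_\lambda}(a\otimes b)=\Delta(b)(a\otimes1)$, $\widetilde{T_\rho}(a\otimes b)=\Delta(a)(1\otimes b)$. Right multiplier bialgebroid $(A,C,s,t,\Delta)$: (i) ${}_AA$ non-degenerate and idempotent; (ii) $s\colon C\to M(A)\subseteq R(A)$ homomorphism, $t\colon C\to M(A)$ anti-homomorphism, commuting images, injective, $As(C)=A=At(C)$; ${}^CA\otimes A_C$, the quotient of $A\otimes A$ by the span of $at(y)\otimes b-a\otimes bs(y)$, non-degenerate as a left module over $A\otimes1$ and $1\otimes A$; (iii) $\Delta$ a homomorphism into the algebra of maps $w\mapsto wT$ on ${}^CA\otimes A_C$ (composition reversed) for which $(a\otimes1)T,(1\otimes b)T$ exist with $(a\otimes b)T=(1\otimes b)((a\otimes1)T)=(a\otimes1)((1\otimes b)T)$; (iv) $\Delta(s(y)t(x)as(y')t(x'))=(s(y)\otimes t(x))\Delta(a)(s(y')\otimes t(x'))$; (v) $(a\otimes1\otimes1)((\Delta\otimes\iota)((1\otimes c)\Delta(b)))=(1\otimes1\otimes c)((\iota\otimes\Delta)((a\otimes1)\Delta(b)))$, interpreted analogously. Associated maps $\widetilde{{}_\lambda T}(a\otimes b)=(a\otimes1)\Delta(b)$, $\widetilde{{}_\rho T}(a\otimes b)=(1\otimes b)\Delta(a)$. *)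

theory Defs
  imports Complex_Main
begin

text \<open>
  An associative complex algebra A (not necessarily unital) is modelled on a type
  'a :: ab_group_add (the whole type is the carrier) together with a complex scalar multiplication
  sc and a bilinear associative multiplication m.  Tensor products of copies of A (and quotients of
  them by balancing relations) are modelled concretely: formal finite linear combinations
  ('x fv = 'x \<Rightarrow> complex with finite support) of pure tensors, modulo the subspace spanned by
  the (multi)linearity relations and the balancing relations.  Elements of a quotient are the
  equivalence classes (cosets, as sets).  The opposite algebra A^op is the same vector space with
  reversed multiplication, and the canonical anti-isomorphism J : A \<rightarrow> A^op is the identity map.
\<close>

subsection \<open>Linear algebra over the complex numbers\<close>

definition vspan :: "(complex \<Rightarrow> 'a::ab_group_add \<Rightarrow> 'a) \<Rightarrow> 'a set \<Rightarrow> 'a set" where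
  "vspan sc S = {x. \<exists>T r. finite T \<and> T \<subseteq> S \<and> x = (\<Sum>v\<in>T. sc (r v) v)}"

definition clin :: "(complex \<Rightarrow> 'a::ab_group_add \<Rightarrow> 'a) \<Rightarrow> (complex \<Rightarrow> 'b::ab_group_add \<Rightarrow> 'b)
     \<Rightarrow> ('a \<Rightarrow> 'b) \<Rightarrow> bool" where
  "clin sc1 sc2 f \<longleftrightarrow> (\<forall>c x y. f (sc1 c x + y) = sc2 c (f x) + f y)"

definition calg :: "(complex \<Rightarrow> 'a::ab_group_add \<Rightarrow> 'a) \<Rightarrow> ('a \<Rightarrow> 'a \<Rightarrow> 'a) \<Rightarrow> bool" where
  "calg sc m \<longleftrightarrow> vector_space sc \<and> (\<forall>x y z. m (m x y) z = m x (m y z))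
      \<and> (\<forall>x. clin sc sc (\<lambda>y. m x y)) \<and> (\<forall>y. clin sc sc (\<lambda>x. m x y))"

definition right_nondeg :: "('a::ab_group_add \<Rightarrow> 'a \<Rightarrow> 'a) \<Rightarrow> bool" where
  "right_nondeg m \<longleftrightarrow> (\<forall>x. (\<forall>a. m x a = 0) \<longrightarrow> x = 0)"

definition left_nondeg :: "('a::ab_group_add \<Rightarrow> 'a \<Rightarrow> 'a) \<Rightarrow> bool" where
  "left_nondeg m \<longleftrightarrow> (\<forall>x. (\<forall>a. m a x = 0) \<longrightarrow> x = 0)"

definition idempotent :: "(complex \<Rightarrow> 'a::ab_group_add \<Rightarrow> 'a) \<Rightarrow> ('a \<Rightarrow> 'a \<Rightarrow> 'a) \<Rightarrow> bool" where
  "idempotent sc m \<longleftrightarrow> vspan sc {m a b | a b. True} = UNIV"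

subsection \<open>Multipliers\<close>

text \<open>L(A) = End(A_A), maps written on the left; composition is the product.\<close>
definition Lalg :: "(complex \<Rightarrow> 'a::ab_group_add \<Rightarrow> 'a) \<Rightarrow> ('a \<Rightarrow> 'a \<Rightarrow> 'a) \<Rightarrow> ('a \<Rightarrow> 'a) set" where
  "Lalg sc m = {T. clin sc sc T \<and> (\<forall>a b. T (m a b) = m (T a) b)}"

text \<open>M(A) = {T \<in> L(A). aT \<in> A}\<close>
definition Mleft :: "(complex \<Rightarrow> 'a::ab_group_add \<Rightarrow> 'a) \<Rightarrow> ('a \<Rightarrow> 'a \<Rightarrow> 'a) \<Rightarrow> ('a \<Rightarrow> 'a) set" where
  "Mleft sc m = {T \<in> Lalg sc m. \<forall>a. \<exists>c. \<forall>b. m a (T b) = m c b}"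

definition mulL :: "('a \<Rightarrow> 'a \<Rightarrow> 'a) \<Rightarrow> 'a \<Rightarrow> ('a \<Rightarrow> 'a) \<Rightarrow> 'a" where
  "mulL m a T = (THE c. \<forall>b. m a (T b) = m c b)"

text \<open>R(A): left module endomorphisms, written on the right (a \<mapsto> aT is the function T);
  the product T1 T2 of R(A) is the function T2 \<circ> T1.\<close>
definition Ralg :: "(complex \<Rightarrow> 'a::ab_group_add \<Rightarrow> 'a) \<Rightarrow> ('a \<Rightarrow> 'a \<Rightarrow> 'a) \<Rightarrow> ('a \<Rightarrow> 'a) set" where
  "Ralg sc m = {T. clin sc sc T \<and> (\<forall>a b. T (m a b) = m a (T b))}"

text \<open>M(A) = {T \<in> R(A). TA \<subseteq> A}\<close>
definition Mright :: "(complex \<Rightarrow> 'a::ab_group_add \<Rightarrow> 'a) \<Rightarrow> ('a \<Rightarrow> 'a \<Rightarrow> 'a) \<Rightarrow> ('a \<Rightarrow> 'a) set" where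
  "Mright sc m = {T \<in> Ralg sc m. \<forall>a. \<exists>c. \<forall>x. m (T x) a = m x c}"

definition mulR :: "('a \<Rightarrow> 'a \<Rightarrow> 'a) \<Rightarrow> ('a \<Rightarrow> 'a) \<Rightarrow> 'a \<Rightarrow> 'a" where
  "mulR m T a = (THE c. \<forall>x. m (T x) a = m x c)"

subsection \<open>Formal linear combinations, tensor products and quotients\<close>

type_synonym 'x fv = "'x \<Rightarrow> complex"

definition fins :: "'x fv set" where
  "fins = {f. finite {x. f x \<noteq> 0}}"

definition dl :: "'x \<Rightarrow> 'x fv" where
  "dl p = (\<lambda>q. if q = p then 1 else 0)"

definition lspan :: "'x fv set \<Rightarrow> 'x fv set" where
  "lspan S = {f. \<exists>T r. finite T \<and> T \<subseteq> S \<and> f = (\<lambda>q. \<Sum>g\<in>T. r g * g q)}"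

definition bilin_rel :: "(complex \<Rightarrow> 'a::ab_group_add \<Rightarrow> 'a) \<Rightarrow> ('a \<times> 'a) fv set" where
  "bilin_rel sc =
      {(\<lambda>q. dl (a + a', b) q - dl (a, b) q - dl (a', b) q) | a a' b. True}
    \<union> {(\<lambda>q. dl (a, b + b') q - dl (a, b) q - dl (a, b') q) | a b b'. True}
    \<union> {(\<lambda>q. dl (sc c a, b) q - c * dl (a, b) q) | c a b. True}
    \<union> {(\<lambda>q. dl (a, sc c b) q - c * dl (a, b) q) | c a b. True}"

definition trilin_rel :: "(complex \<Rightarrow> 'a::ab_group_add \<Rightarrow> 'a) \<Rightarrow> ('a \<times> 'a \<times> 'a) fv set" where
  "trilin_rel sc =
      {(\<lambda>q. dl (a + a', b, d) q - dl (a, b, d) q - dl (a', b, d) q) | a a' b d. True}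
    \<union> {(\<lambda>q. dl (a, b + b', d) q - dl (a, b, d) q - dl (a, b', d) q) | a b b' d. True}
    \<union> {(\<lambda>q. dl (a, b, d + d') q - dl (a, b, d) q - dl (a, b, d') q) | a b d d'. True}
    \<union> {(\<lambda>q. dl (sc c a, b, d) q - c * dl (a, b, d) q) | c a b d. True}
    \<union> {(\<lambda>q. dl (a, sc c b, d) q - c * dl (a, b, d) q) | c a b d. True}
    \<union> {(\<lambda>q. dl (a, b, sc c d) q - c * dl (a, b, d) q) | c a b d. True}"

definition tens_rel :: "(complex \<Rightarrow> 'a::ab_group_add \<Rightarrow> 'a) \<Rightarrow> ('a \<times> 'a) fv set" where
  "tens_rel sc = lspan (bilin_rel sc)"

text \<open>For the left case
  (_B A \<otimes> A^B) use f = s, g = t; for the right case (^C A \<otimes> A_C, relations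
  a t(y) \<otimes> b - a \<otimes> b s(y)) use f = t, g = s, since a t(y) = t(y) applied to a.\<close>
definition bal_rel :: "(complex \<Rightarrow> 'a::ab_group_add \<Rightarrow> 'a) \<Rightarrow> ('b \<Rightarrow> 'a \<Rightarrow> 'a) \<Rightarrow> ('b \<Rightarrow> 'a \<Rightarrow> 'a)
     \<Rightarrow> ('a \<times> 'a) fv set" where
  "bal_rel sc f g = lspan (bilin_rel sc \<union> {(\<lambda>q. dl (f y a, b) q - dl (a, g y b) q) | y a b. True})"

definition bal3_rel :: "(complex \<Rightarrow> 'a::ab_group_add \<Rightarrow> 'a) \<Rightarrow> ('b \<Rightarrow> 'a \<Rightarrow> 'a) \<Rightarrow> ('b \<Rightarrow> 'a \<Rightarrow> 'a)
     \<Rightarrow> ('a \<times> 'a \<times> 'a) fv set" where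
  "bal3_rel sc f g = lspan (trilin_rel sc
      \<union> {(\<lambda>q. dl (f y a, b, d) q - dl (a, g y b, d) q) | y a b d. True}
      \<union> {(\<lambda>q. dl (a, f y b, d) q - dl (a, b, g y d) q) | y a b d. True})"

definition cls :: "'x fv set \<Rightarrow> 'x fv \<Rightarrow> 'x fv set" where
  "cls N f = {g \<in> fins. (\<lambda>q. g q - f q) \<in> N}"

definition qsp :: "'x fv set \<Rightarrow> 'x fv set set" where
  "qsp N = cls N ` fins"

definition rep :: "'x fv set \<Rightarrow> 'x fv" where
  "rep X = (SOME f. f \<in> X)"

definition qlc :: "'x fv set \<Rightarrow> complex \<Rightarrow> 'x fv set \<Rightarrow> 'x fv set \<Rightarrow> 'x fv set" where
  "qlc N c X Y = cls N (\<lambda>q. c * rep X q + rep Y q)"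

definition qzero :: "'x fv set \<Rightarrow> 'x fv set" where
  "qzero N = cls N (\<lambda>q. 0)"

definition lext :: "('x \<Rightarrow> 'y fv) \<Rightarrow> 'x fv \<Rightarrow> 'y fv" where
  "lext \<phi> f = (\<lambda>q. \<Sum>p\<in>{p. f p \<noteq> 0}. f p * \<phi> p q)"

definition qact :: "'y fv set \<Rightarrow> ('x \<Rightarrow> 'y fv) \<Rightarrow> 'x fv set \<Rightarrow> 'y fv set" where
  "qact N \<phi> X = cls N (lext \<phi> (rep X))"

definition tmap :: "('a \<Rightarrow> 'a) \<Rightarrow> ('a \<Rightarrow> 'a) \<Rightarrow> 'a \<times> 'a \<Rightarrow> ('a \<times> 'a) fv" where
  "tmap F G p = dl (F (fst p), G (snd p))"

definition qlinear :: "('x fv set) \<Rightarrow> ('x fv set \<Rightarrow> 'x fv set) \<Rightarrow> bool" where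
  "qlinear N T \<longleftrightarrow> (\<forall>X\<in>qsp N. T X \<in> qsp N)
     \<and> (\<forall>X\<in>qsp N. \<forall>Y\<in>qsp N. \<forall>c. T (qlc N c X Y) = qlc N c (T X) (T Y))"

definition sumd :: "('a \<times> 'a) list \<Rightarrow> ('a \<times> 'a) fv" where
  "sumd ps = (\<lambda>r. sum_list (map (\<lambda>pq. dl pq r) ps))"

definition tens21 :: "('a \<times> 'a) fv \<Rightarrow> 'a \<Rightarrow> ('a \<times> 'a \<times> 'a) fv" where
  "tens21 f q = (\<lambda>(x, y, z). f (x, y) * dl q z)"

definition tens12 :: "'a \<Rightarrow> ('a \<times> 'a) fv \<Rightarrow> ('a \<times> 'a \<times> 'a) fv" where
  "tens12 u g = (\<lambda>(x, y, z). dl u x * g (y, z))"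

subsection \<open>Multiplier bialgebroids\<close>

record ('a, 'b) mbialg =
  scA :: "complex \<Rightarrow> 'a \<Rightarrow> 'a"
  mulA :: "'a \<Rightarrow> 'a \<Rightarrow> 'a"
  scB :: "complex \<Rightarrow> 'b \<Rightarrow> 'b"
  mulB :: "'b \<Rightarrow> 'b \<Rightarrow> 'b"
  src :: "'b \<Rightarrow> 'a \<Rightarrow> 'a"
  tgt :: "'b \<Rightarrow> 'a \<Rightarrow> 'a"
  cop :: "'a \<Rightarrow> ('a \<times> 'a) fv set \<Rightarrow> ('a \<times> 'a) fv set"

definition NL :: "('a::ab_group_add, 'b) mbialg \<Rightarrow> ('a \<times> 'a) fv set" where
  "NL L = bal_rel (scA L) (src L) (tgt L)"

definition QL :: "('a::ab_group_add, 'b) mbialg \<Rightarrow> ('a \<times> 'a) fv set set" where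
  "QL L = qsp (NL L)"

text \<open>T(a \<otimes> 1): the element \<omega> with T(a \<otimes> b) = \<omega>(1 \<otimes> b) for all b\<close>
definition Ta1 :: "('a::ab_group_add, 'b) mbialg \<Rightarrow> (('a \<times> 'a) fv set \<Rightarrow> ('a \<times> 'a) fv set)
     \<Rightarrow> 'a \<Rightarrow> ('a \<times> 'a) fv set" where
  "Ta1 L T a = (THE \<omega>. \<omega> \<in> QL L \<and>
     (\<forall>b. T (cls (NL L) (dl (a, b))) = qact (NL L) (tmap id (\<lambda>y. mulA L y b)) \<omega>))"

text \<open>T(1 \<otimes> b): the element \<omega> with T(a \<otimes> b) = \<omega>(a \<otimes> 1) for all a\<close>
definition T1b :: "('a::ab_group_add, 'b) mbialg \<Rightarrow> (('a \<times> 'a) fv set \<Rightarrow> ('a \<times> 'a) fv set)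
     \<Rightarrow> 'a \<Rightarrow> ('a \<times> 'a) fv set" where
  "T1b L T b = (THE \<omega>. \<omega> \<in> QL L \<and>
     (\<forall>a. T (cls (NL L) (dl (a, b))) = qact (NL L) (tmap (\<lambda>x. mulA L x a) id) \<omega>))"

definition left_ops :: "('a::ab_group_add, 'b) mbialg \<Rightarrow> (('a \<times> 'a) fv set \<Rightarrow> ('a \<times> 'a) fv set) set" where
  "left_ops L = {T. qlinear (NL L) T
     \<and> (\<forall>a. \<exists>\<omega>\<in>QL L. \<forall>b. T (cls (NL L) (dl (a, b))) = qact (NL L) (tmap id (\<lambda>y. mulA L y b)) \<omega>)
     \<and> (\<forall>b. \<exists>\<omega>\<in>QL L. \<forall>a. T (cls (NL L) (dl (a, b))) = qact (NL L) (tmap (\<lambda>x. mulA L x a) id) \<omega>)}"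

definition left_mba :: "('a::ab_group_add, 'b::ab_group_add) mbialg \<Rightarrow> bool" where
  "left_mba L \<longleftrightarrow>
    \<comment> \<open>(i)\<close>
    calg (scA L) (mulA L) \<and> right_nondeg (mulA L) \<and> idempotent (scA L) (mulA L)
    \<comment> \<open>(ii)\<close>
    \<and> calg (scB L) (mulB L)
    \<and> (\<forall>x. src L x \<in> Mleft (scA L) (mulA L)) \<and> (\<forall>x. tgt L x \<in> Mleft (scA L) (mulA L))
    \<and> (\<forall>c x y. src L (scB L c x + y) = (\<lambda>a. scA L c (src L x a) + src L y a))
    \<and> (\<forall>c x y. tgt L (scB L c x + y) = (\<lambda>a. scA L c (tgt L x a) + tgt L y a))
    \<and> (\<forall>x y. src L (mulB L x y) = src L x \<circ> src L y)
    \<and> (\<forall>x y. tgt L (mulB L x y) = tgt L y \<circ> tgt L x)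
    \<and> (\<forall>x y. src L x \<circ> tgt L y = tgt L y \<circ> src L x)
    \<and> inj (src L) \<and> inj (tgt L)
    \<and> vspan (scA L) {src L x a | x a. True} = UNIV
    \<and> vspan (scA L) {tgt L x a | x a. True} = UNIV
    \<and> (\<forall>\<omega>\<in>QL L. (\<forall>c. qact (NL L) (tmap (\<lambda>x. mulA L x c) id) \<omega> = qzero (NL L)) \<longrightarrow> \<omega> = qzero (NL L))
    \<and> (\<forall>\<omega>\<in>QL L. (\<forall>c. qact (NL L) (tmap id (\<lambda>y. mulA L y c)) \<omega> = qzero (NL L)) \<longrightarrow> \<omega> = qzero (NL L))
    \<comment> \<open>(iii)\<close>
    \<and> (\<forall>a. cop L a \<in> left_ops L)
    \<and> (\<forall>c a b. \<forall>X\<in>QL L. cop L (scA L c a + b) X = qlc (NL L) c (cop L a X) (cop L b X))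
    \<and> (\<forall>a b. \<forall>X\<in>QL L. cop L (mulA L a b) X = cop L a (cop L b X))
    \<comment> \<open>(iv)\<close>
    \<and> (\<forall>x y x' y' a. \<forall>X\<in>QL L.
         cop L (mulL (mulA L) (src L x (tgt L y a)) (src L x' \<circ> tgt L y')) X
         = qact (NL L) (tmap (tgt L y) (src L x))
             (cop L a (qact (NL L) (tmap (tgt L y') (src L x')) X)))
    \<comment> \<open>(v)\<close>
    \<and> (\<forall>a b c ps us.
         cls (NL L) (sumd ps) = T1b L (cop L b) c \<longrightarrow>
         cls (NL L) (sumd us) = Ta1 L (cop L b) a \<longrightarrow>
         cls (bal3_rel (scA L) (src L) (tgt L))
             (\<lambda>r. sum_list (map (\<lambda>(p, q). tens21 (rep (Ta1 L (cop L p) a)) q r) ps))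
         = cls (bal3_rel (scA L) (src L) (tgt L))
             (\<lambda>r. sum_list (map (\<lambda>(u, v). tens12 u (rep (T1b L (cop L v) c)) r) us)))"

definition left_Tlambda :: "('a::ab_group_add, 'b) mbialg \<Rightarrow> ('a \<times> 'a) fv set \<Rightarrow> ('a \<times> 'a) fv set" where
  "left_Tlambda L = qact (NL L) (\<lambda>p. rep (Ta1 L (cop L (snd p)) (fst p)))"

definition left_Trho :: "('a::ab_group_add, 'b) mbialg \<Rightarrow> ('a \<times> 'a) fv set \<Rightarrow> ('a \<times> 'a) fv set" where
  "left_Trho L = qact (NL L) (\<lambda>p. rep (T1b L (cop L (fst p)) (snd p)))"

definition NR :: "('a::ab_group_add, 'b) mbialg \<Rightarrow> ('a \<times> 'a) fv set" where
  "NR R = bal_rel (scA R) (tgt R) (src R)"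

definition QR :: "('a::ab_group_add, 'b) mbialg \<Rightarrow> ('a \<times> 'a) fv set set" where
  "QR R = qsp (NR R)"

text \<open>(a \<otimes> 1)T: the element \<omega> with (a \<otimes> b)T = (1 \<otimes> b)\<omega> for all b\<close>
definition Ra1 :: "('a::ab_group_add, 'b) mbialg \<Rightarrow> (('a \<times> 'a) fv set \<Rightarrow> ('a \<times> 'a) fv set)
     \<Rightarrow> 'a \<Rightarrow> ('a \<times> 'a) fv set" where
  "Ra1 R T a = (THE \<omega>. \<omega> \<in> QR R \<and>
     (\<forall>b. T (cls (NR R) (dl (a, b))) = qact (NR R) (tmap id (mulA R b)) \<omega>))"

text \<open>(1 \<otimes> b)T: the element \<omega> with (a \<otimes> b)T = (a \<otimes> 1)\<omega> for all a\<close>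
definition R1b :: "('a::ab_group_add, 'b) mbialg \<Rightarrow> (('a \<times> 'a) fv set \<Rightarrow> ('a \<times> 'a) fv set)
     \<Rightarrow> 'a \<Rightarrow> ('a \<times> 'a) fv set" where
  "R1b R T b = (THE \<omega>. \<omega> \<in> QR R \<and>
     (\<forall>a. T (cls (NR R) (dl (a, b))) = qact (NR R) (tmap (mulA R a) id) \<omega>))"

text \<open>maps w \<mapsto> wT of ^C A \<otimes> A_C (T is the function w \<mapsto> wT) for which (a \<otimes> 1)T,
  (1 \<otimes> b)T exist\<close>
definition right_ops :: "('a::ab_group_add, 'b) mbialg \<Rightarrow> (('a \<times> 'a) fv set \<Rightarrow> ('a \<times> 'a) fv set) set" where
  "right_ops R = {T. qlinear (NR R) T
     \<and> (\<forall>a. \<exists>\<omega>\<in>QR R. \<forall>b. T (cls (NR R) (dl (a, b))) = qact (NR R) (tmap id (mulA R b)) \<omega>)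
     \<and> (\<forall>b. \<exists>\<omega>\<in>QR R. \<forall>a. T (cls (NR R) (dl (a, b))) = qact (NR R) (tmap (mulA R a) id) \<omega>)}"

text \<open>In R(A) maps are written on the right; as functions, the product S T of R(A) is T \<circ> S.
  Hence: s homomorphism means s(xy) = s(y) \<circ> s(x), t anti-homomorphism means t(xy) = t(x) \<circ> t(y),
  \<Delta> homomorphism means \<Delta>(ab) = \<Delta>(b) \<circ> \<Delta>(a);  s(y)t(x) a s(y')t(x') is the element
  t(x')(s(y')(e)) with e = (t(x) \<circ> s(y)) \<cdot> a.\<close>
definition right_mba :: "('a::ab_group_add, 'b::ab_group_add) mbialg \<Rightarrow> bool" where
  "right_mba R \<longleftrightarrow>
    \<comment> \<open>(i)\<close>
    calg (scA R) (mulA R) \<and> left_nondeg (mulA R) \<and> idempotent (scA R) (mulA R)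
    \<comment> \<open>(ii)\<close>
    \<and> calg (scB R) (mulB R)
    \<and> (\<forall>x. src R x \<in> Mright (scA R) (mulA R)) \<and> (\<forall>x. tgt R x \<in> Mright (scA R) (mulA R))
    \<and> (\<forall>c x y. src R (scB R c x + y) = (\<lambda>a. scA R c (src R x a) + src R y a))
    \<and> (\<forall>c x y. tgt R (scB R c x + y) = (\<lambda>a. scA R c (tgt R x a) + tgt R y a))
    \<and> (\<forall>x y. src R (mulB R x y) = src R y \<circ> src R x)
    \<and> (\<forall>x y. tgt R (mulB R x y) = tgt R x \<circ> tgt R y)
    \<and> (\<forall>x y. src R x \<circ> tgt R y = tgt R y \<circ> src R x)
    \<and> inj (src R) \<and> inj (tgt R)
    \<and> vspan (scA R) {src R x a | x a. True} = UNIV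
    \<and> vspan (scA R) {tgt R x a | x a. True} = UNIV
    \<and> (\<forall>\<omega>\<in>QR R. (\<forall>c. qact (NR R) (tmap (mulA R c) id) \<omega> = qzero (NR R)) \<longrightarrow> \<omega> = qzero (NR R))
    \<and> (\<forall>\<omega>\<in>QR R. (\<forall>c. qact (NR R) (tmap id (mulA R c)) \<omega> = qzero (NR R)) \<longrightarrow> \<omega> = qzero (NR R))
    \<comment> \<open>(iii)\<close>
    \<and> (\<forall>a. cop R a \<in> right_ops R)
    \<and> (\<forall>c a b. \<forall>X\<in>QR R. cop R (scA R c a + b) X = qlc (NR R) c (cop R a X) (cop R b X))
    \<and> (\<forall>a b. \<forall>X\<in>QR R. cop R (mulA R a b) X = cop R b (cop R a X))
    \<comment> \<open>(iv)\<close>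
    \<and> (\<forall>y x y' x' a. \<forall>X\<in>QR R.
         cop R (tgt R x' (src R y' (mulR (mulA R) (tgt R x \<circ> src R y) a))) X
         = qact (NR R) (tmap (src R y') (tgt R x'))
             (cop R a (qact (NR R) (tmap (src R y) (tgt R x)) X)))
    \<comment> \<open>(v)\<close>
    \<and> (\<forall>a b c ps us.
         cls (NR R) (sumd ps) = R1b R (cop R b) c \<longrightarrow>
         cls (NR R) (sumd us) = Ra1 R (cop R b) a \<longrightarrow>
         cls (bal3_rel (scA R) (tgt R) (src R))
             (\<lambda>r. sum_list (map (\<lambda>(p, q). tens21 (rep (Ra1 R (cop R p) a)) q r) ps))
         = cls (bal3_rel (scA R) (tgt R) (src R))
             (\<lambda>r. sum_list (map (\<lambda>(u, v). tens12 u (rep (R1b R (cop R v) c)) r) us)))"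

definition right_Tlambda :: "('a::ab_group_add, 'b) mbialg \<Rightarrow> ('a \<times> 'a) fv set \<Rightarrow> ('a \<times> 'a) fv set" where
  "right_Tlambda R = qact (NR R) (\<lambda>p. rep (Ra1 R (cop R (snd p)) (fst p)))"

definition right_Trho :: "('a::ab_group_add, 'b) mbialg \<Rightarrow> ('a \<times> 'a) fv set \<Rightarrow> ('a \<times> 'a) fv set" where
  "right_Trho R = qact (NR R) (\<lambda>p. rep (R1b R (cop R (fst p)) (snd p)))"

text \<open>With J = id (A^op is A with the reversed product), J \<otimes> J is the
  identity on formal combinations, and the defining formula
  (J(b) \<otimes> J(c)) \<Delta>^op(J(a)) = (J \<otimes> J)(\<Delta>(a)(b \<otimes> c)) says that the map w \<mapsto> w \<Delta>^op(a)
  is the map \<Delta>(a).\<close>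
definition mba_op :: "('a, 'b) mbialg \<Rightarrow> ('a, 'b) mbialg" where
  "mba_op L = \<lparr>scA = scA L, mulA = (\<lambda>x y. mulA L y x), scB = scB L, mulB = mulB L,
                src = tgt L, tgt = src L, cop = cop L\<rparr>"

end

theory Submission
  imports Defs
begin

text \<open>
  With J the identity, the opposite of a left multiplier bialgebroid has the same underlying
  spaces, the same comultiplication and the same balanced tensor product, so every axiom of a
  right multiplier bialgebroid for (A^op, B, t, s, \<Delta>^op) is literally an axiom of
  (A, B, s, t, \<Delta>) read in the opposite algebra, with the roles of s and t exchanged.  The only
  axiom that changes shape is the module property (iv): there the multiplier s(x')t(y') acts on the
  element a s(x)t(y) from the other side, and the two readings agree because left multipliers
  commute with right multiplication by multipliers, S (a T) = (S a) T.  Since taking the opposite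
  is an involution, it is a bijection between left and right multiplier bialgebroids.
\<close>

lemma calg_flip: "calg sc (\<lambda>x y. m y x) = calg sc m"
  unfolding calg_def by metis

lemma left_nondeg_flip: "left_nondeg (\<lambda>x y. m y x) = right_nondeg m"
  by (simp add: left_nondeg_def right_nondeg_def)

lemma idempotent_flip: "idempotent sc (\<lambda>x y. m y x) = idempotent sc m"
proof -
  have "{m b a |a b. True} = {m a b |a b. True}" by blast
  then show ?thesis by (simp add: idempotent_def)
qed

lemma Ralg_flip: "Ralg sc (\<lambda>x y. m y x) = Lalg sc m"
  unfolding Ralg_def Lalg_def by (subst all_comm) (rule refl)

lemma Mright_flip: "Mright sc (\<lambda>x y. m y x) = Mleft sc m"
  unfolding Mright_def Mleft_def by (simp only: Ralg_flip)

lemma mulR_flip: "mulR (\<lambda>x y. m y x) T a = mulL m a T"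
  unfolding mulR_def mulL_def ..

lemmas opposite_algebra_simps =
  calg_flip left_nondeg_flip idempotent_flip Mright_flip mulR_flip

lemma calg_diff_left:
  assumes "calg sc m"
  shows "m (x - y) b = m x b - m y b"
proof -
  have "vector_space sc" and "clin sc sc (\<lambda>x. m x b)"
    using assms by (auto simp: calg_def)
  then have "m (u + v) b = m u b + m v b" for u v
    using vector_space.vector_space_assms(4) unfolding clin_def by metis
  from this[of "x - y" y] show ?thesis
    by (simp add: algebra_simps)
qed

lemma mulL_eqI:
  assumes "calg sc m" "right_nondeg m" "\<forall>b. m a (T b) = m c b"
  shows "mulL m a T = c"
  unfolding mulL_def
proof (rule the_equality)
  fix c' assume "\<forall>b. m a (T b) = m c' b"
  then have "\<forall>b. m (c' - c) b = 0"
    using assms(3) calg_diff_left[OF assms(1)] by simp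
  then show "c' = c"
    using assms(2) unfolding right_nondeg_def by fastforce
qed (use assms in auto)

lemma Mleft_comp:
  assumes S: "S \<in> Mleft sc m" and T: "T \<in> Mleft sc m"
  shows "S \<circ> T \<in> Mleft sc m"
proof -
  have "S \<circ> T \<in> Lalg sc m"
    using S T unfolding Mleft_def Lalg_def clin_def by auto
  moreover have "\<exists>c. \<forall>b. m a ((S \<circ> T) b) = m c b" for a
  proof -
    obtain c1 where "\<forall>b. m a (S b) = m c1 b" using S unfolding Mleft_def by blast
    moreover obtain c2 where "\<forall>b. m c1 (T b) = m c2 b" using T unfolding Mleft_def by blast
    ultimately show ?thesis by auto
  qed
  ultimately show ?thesis unfolding Mleft_def by blast
qed

lemma Mleft_mulL_commute:
  assumes "calg sc m" "right_nondeg m" and S: "S \<in> Mleft sc m" and T: "T \<in> Mleft sc m"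
  shows "S (mulL m a T) = mulL m (S a) T"
proof -
  obtain c where c: "\<forall>b. m a (T b) = m c b" using T unfolding Mleft_def by blast
  have "\<forall>u v. S (m u v) = m (S u) v" using S unfolding Mleft_def Lalg_def by blast
  with c have "\<forall>b. m (S a) (T b) = m (S c) b" by metis
  then show ?thesis
    using mulL_eqI[OF assms(1,2)] c by metis
qed

lemma mba_op_simps [simp]:
  "scA (mba_op L) = scA L" "mulA (mba_op L) = (\<lambda>x y. mulA L y x)"
  "scB (mba_op L) = scB L" "mulB (mba_op L) = mulB L"
  "src (mba_op L) = tgt L" "tgt (mba_op L) = src L" "cop (mba_op L) = cop L"
  by (simp_all add: mba_op_def)

lemma mba_op_mba_op [simp]: "mba_op (mba_op L) = L"
  by (simp add: mba_op_def)

lemma NR_mba_op [simp]: "NR (mba_op L) = NL L"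
  by (simp add: NR_def NL_def)

lemma QR_mba_op [simp]: "QR (mba_op L) = QL L"
  by (simp add: QR_def QL_def)

lemma Ra1_mba_op [simp]: "Ra1 (mba_op L) = Ta1 L"
  by (simp add: Ra1_def Ta1_def fun_eq_iff)

lemma R1b_mba_op [simp]: "R1b (mba_op L) = T1b L"
  by (simp add: R1b_def T1b_def fun_eq_iff)

lemma right_ops_mba_op [simp]: "right_ops (mba_op L) = left_ops L"
  by (simp add: right_ops_def left_ops_def)

lemma right_Tlambda_mba_op [simp]: "right_Tlambda (mba_op L) = left_Tlambda L"
  by (simp add: right_Tlambda_def left_Tlambda_def)

lemma right_Trho_mba_op [simp]: "right_Trho (mba_op L) = left_Trho L"
  by (simp add: right_Trho_def left_Trho_def)

lemma module_property_mba_op_iff: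
  assumes "calg (scA L) (mulA L)" "right_nondeg (mulA L)"
    and "\<forall>x. src L x \<in> Mleft (scA L) (mulA L)" "\<forall>x. tgt L x \<in> Mleft (scA L) (mulA L)"
  shows "(\<forall>y x y' x' a. \<forall>X\<in>QL L.
            cop L (src L x' (tgt L y' (mulL (mulA L) a (src L x \<circ> tgt L y)))) X
            = qact (NL L) (tmap (tgt L y') (src L x'))
                (cop L a (qact (NL L) (tmap (tgt L y) (src L x)) X)))
     \<longleftrightarrow> (\<forall>x y x' y' a. \<forall>X\<in>QL L.
            cop L (mulL (mulA L) (src L x (tgt L y a)) (src L x' \<circ> tgt L y')) X
            = qact (NL L) (tmap (tgt L y) (src L x))
                (cop L a (qact (NL L) (tmap (tgt L y') (src L x')) X)))"
  using assms by (simp add: Mleft_mulL_commute Mleft_comp) blast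

lemma right_mba_mba_op_iff: "right_mba (mba_op L) \<longleftrightarrow> left_mba L"
proof -
  have comm: "(\<forall>x y. tgt L x \<circ> src L y = src L y \<circ> tgt L x)
    \<longleftrightarrow> (\<forall>x y. src L x \<circ> tgt L y = tgt L y \<circ> src L x)"
    by metis
  have mult: "(\<forall>a b. \<forall>X\<in>QL L. cop L (mulA L b a) X = cop L b (cop L a X))
    \<longleftrightarrow> (\<forall>a b. \<forall>X\<in>QL L. cop L (mulA L a b) X = cop L a (cop L b X))"
    by blast
  show ?thesis
    unfolding right_mba_def left_mba_def
    \<comment> \<open>the flip lemmas must be instantiated: \<open>\<lambda>x y. ?m y x\<close> matches every binary
      operation, so as general rewrite rules they loop\<close>
    apply (simp only: mba_op_simps NR_mba_op QR_mba_op Ra1_mba_op R1b_mba_op right_ops_mba_op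
        opposite_algebra_simps[where m = "mulA L"] comm mult)
    apply (rule iffI; elim conjE; intro conjI; (assumption)?)
    using module_property_mba_op_iff[of L] by blast+
qed

theorem proposition4p2:
  shows "(\<forall>L :: ('a::ab_group_add, 'b::ab_group_add) mbialg. left_mba L \<longrightarrow>
            QR (mba_op L) = QL L
          \<and> right_mba (mba_op L)
          \<and> (\<forall>X\<in>qsp (tens_rel (scA L)). right_Tlambda (mba_op L) X = left_Tlambda L X)
          \<and> (\<forall>X\<in>qsp (tens_rel (scA L)). right_Trho (mba_op L) X = left_Trho L X))
       \<and> (\<forall>R :: ('a, 'b) mbialg. right_mba R \<longrightarrow> (\<exists>!L. left_mba L \<and> R = mba_op L))"
proof (intro conjI allI impI)
  fix R :: "('a, 'b) mbialg"
  assume "right_mba R"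
  then have "left_mba (mba_op R)"
    using right_mba_mba_op_iff[of "mba_op R"] by simp
  then show "\<exists>!L. left_mba L \<and> R = mba_op L"
    by (metis mba_op_mba_op)
qed (simp_all add: right_mba_mba_op_iff)

end
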